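(* Let $a,b,c\in S^0$ be real-valued on $[0,T]\times\mathbb R^n\times\mathbb R^n$ with $b\ge\delta_1t$, $|ac|\le\bar\epsilon b^2$, $|c|\le\bar\epsilon b^{3/2}$ ($\bar\epsilon$ a sufficiently small absolute constant) and $\partial_tc=\mathcal O(b)$. Then there is $\epsilon>0$ such that the matrix $S-\epsilon t\,\partial_tS$ is positive semidefinite at every point of $[0,T]\times\mathbb R^n\times\mathbb R^n$.
   Context: $S^0=S^0_{1,0}(\mathbb R^n\times\mathbb R^n)$, symbols depending smoothly on $t\in[0,T]$ with seminorms of the symbols and of their $t$-derivatives bounded uniformly; $f=\mathcal O(g)$ means $|f|\le Cg$ on $[0,T]\times\mathbb R^{2n}$. $S=\frac13\begin{pmatrix}3&2a&-b\\ 2a&2(a^2+b)&-ab-3c\\ -b&-ab-3c&b^2-2ac\end{pmatrix}$. *)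

theory Defs
  imports "HOL-Analysis.Analysis"
begin

text \<open>Points of [0,T] x R^n x R^n are written z = (t, (x, xi)).\<close>
type_synonym ('n) pt = "real \<times> ((real^'n) \<times> (real^'n))"

definition Dom :: "real \<Rightarrow> ('n::finite) pt set" where
  "Dom T = {0..T} \<times> UNIV"

definition tdir :: "('n::finite) pt" where "tdir = (1, (0, 0))"
definition xdirs :: "('n::finite) pt set" where "xdirs = {(0, (e, 0)) | e. e \<in> Basis}"
definition xidirs :: "('n::finite) pt set" where "xidirs = {(0, (0, e)) | e. e \<in> Basis}"
definition dirs :: "('n::finite) pt set" where "dirs = insert tdir (xdirs \<union> xidirs)"

text \<open>Partial derivative in direction v (one-sided in t at the endpoints of [0,T]).\<close>
definition dD :: "real \<Rightarrow> ('n::finite) pt \<Rightarrow> (('n::finite) pt \<Rightarrow> real) \<Rightarrow> (('n::finite) pt \<Rightarrow> real)" where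
  "dD T v f = (\<lambda>z. frechet_derivative f (at z within Dom T) v)"

fun dDs :: "real \<Rightarrow> ('n::finite) pt list \<Rightarrow> (('n::finite) pt \<Rightarrow> real) \<Rightarrow> (('n::finite) pt \<Rightarrow> real)" where
  "dDs T [] f = f"
| "dDs T (v # vs) f = dD T v (dDs T vs f)"

definition dt :: "real \<Rightarrow> (('n::finite) pt \<Rightarrow> real) \<Rightarrow> (('n::finite) pt \<Rightarrow> real)" where
  "dt T f = dD T tdir f"

text \<open>Symbols in S^0_{1,0} depending smoothly on t in [0,T], all t-derivatives being
  S^0 symbols with uniformly bounded seminorms:
  |d_t^k d_x^beta d_xi^alpha f| <= C (1+|xi|)^(-|alpha|) on [0,T] x R^n x R^n.\<close>
definition tsymbol0 :: "real \<Rightarrow> (('n::finite) pt \<Rightarrow> real) \<Rightarrow> bool" where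
  "tsymbol0 T f \<longleftrightarrow>
     (\<forall>vs. set vs \<subseteq> dirs \<longrightarrow>
        (\<forall>z\<in>Dom T. dDs T vs f differentiable (at z within Dom T)) \<and>
        (\<exists>C. \<forall>z\<in>Dom T. \<bar>dDs T vs f z\<bar>
              \<le> C * (1 + norm (snd (snd z))) powr (- real (length (filter (\<lambda>v. v \<in> xidirs) vs)))))"

definition Smat :: "real \<Rightarrow> real \<Rightarrow> real \<Rightarrow> real^3^3" where
  "Smat a b c = (1/3) *\<^sub>R vector [
      vector [3, 2*a, -b],
      vector [2*a, 2*(a^2+b), -a*b - 3*c],
      vector [-b, -a*b - 3*c, b^2 - 2*a*c]]"

definition dtS :: "real \<Rightarrow> (('n::finite) pt \<Rightarrow> real) \<Rightarrow> (('n::finite) pt \<Rightarrow> real) \<Rightarrow> (('n::finite) pt \<Rightarrow> real)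
    \<Rightarrow> ('n::finite) pt \<Rightarrow> real^3^3" where
  "dtS T a b c z = (\<chi> i j. dt T (\<lambda>w. Smat (a w) (b w) (c w) $ i $ j) z)"

definition psd :: "real^'m^'m \<Rightarrow> bool" where
  "psd M \<longleftrightarrow> transpose M = M \<and> (\<forall>v. 0 \<le> v \<bullet> (M *v v))"

end

theory Submission
  imports Defs
begin

text \<open>Completing the square in \<open>v\<^sub>1\<close> writes \<open>3 v\<bullet>S v\<close> as \<open>u\<^sup>2/3\<close> plus a quadratic
  form in \<open>(v\<^sub>2, v\<^sub>3)\<close>, where \<open>u = 3v\<^sub>1 + 2a v\<^sub>2 - b v\<^sub>3\<close>; the smallness of \<open>c\<close> makes
  that form dominate a quarter of \<open>(a v\<^sub>2)\<^sup>2 + b v\<^sub>2\<^sup>2 + (b v\<^sub>3)\<^sup>2\<close>. In the variables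
  \<open>(u, \<surd>b v\<^sub>2, a v\<^sub>2, b v\<^sub>3)\<close> the form \<open>b\<cdot>3 v\<bullet>\<partial>\<^sub>tS v\<close> has coefficients bounded by the symbol
  estimates, because \<open>\<partial>\<^sub>tc = O(b)\<close> and \<open>c = O(b\<^sup>3\<^sup>/\<^sup>2)\<close>. Since \<open>t \<le> b/\<delta>\<^sub>1\<close>, the perturbation
  \<open>\<epsilon> t v\<bullet>\<partial>\<^sub>tS v\<close> is then absorbed for \<open>\<epsilon>\<close> small.\<close>

lemma abs_mult_le_half_sum_squares:
  fixes m M x y :: real
  assumes "\<bar>m\<bar> \<le> M"
  shows "2 * \<bar>m * x * y\<bar> \<le> M * x^2 + M * y^2"
proof -
  have "2 * \<bar>x * y\<bar> \<le> x^2 + y^2"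
    using sum_squares_bound[of "\<bar>x\<bar>" "\<bar>y\<bar>"] by (simp add: abs_mult)
  then have "\<bar>m\<bar> * (2 * \<bar>x * y\<bar>) \<le> M * (x^2 + y^2)"
    using assms by (intro mult_mono) auto
  then show ?thesis
    by (simp add: abs_mult algebra_simps)
qed

lemma real_sqrt_le_of_le_ge_1:
  fixes x K :: real
  assumes "1 \<le> K" and "x \<le> K"
  shows "sqrt x \<le> K"
proof -
  have "K \<le> K^2"
    using assms(1) by (simp add: power2_eq_square)
  then show ?thesis
    using assms by (intro real_le_lsqrt) auto
qed

lemma powr_three_halves: "0 \<le> x \<Longrightarrow> x powr (3/2) = x * sqrt (x::real)"
  using powr_add[of x 1 "1/2"] by (cases "x = 0") (simp_all add: powr_half_sqrt)

text \<open>The arguments \<open>A, B, C\<close> stand for the time derivatives of \<open>a, b, c\<close>.\<close>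

definition dSmat :: "real \<Rightarrow> real \<Rightarrow> real \<Rightarrow> real \<Rightarrow> real \<Rightarrow> real \<Rightarrow> real^3^3" where
  "dSmat A B C a b c = (1/3) *\<^sub>R vector [
      vector [0, 2*A, -B],
      vector [2*A, 4*a*A + 2*B, -A*b - a*B - 3*C],
      vector [-B, -A*b - a*B - 3*C, 2*b*B - 2*A*c - 2*a*C]]"

definition schur_form :: "real \<Rightarrow> real \<Rightarrow> real \<Rightarrow> real \<Rightarrow> real \<Rightarrow> real" where
  "schur_form a b c y z =
     (2*a^2/3 + 2*b)*y^2 - 2*(a*b/3 + 3*c)*y*z + (2*b^2/3 - 2*a*c)*z^2"

definition dSmat_form :: "real \<Rightarrow> real \<Rightarrow> real \<Rightarrow> real \<Rightarrow> real \<Rightarrow> real \<Rightarrow> real \<Rightarrow> real \<Rightarrow> real \<Rightarrow> real" where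
  "dSmat_form A B C a b c u y z =
     4/3*A*u*y - 2/3*B*u*z + (4/3*a*A + 2*B)*y^2 - (2/3*A*b + 2/3*a*B + 6*C)*y*z
     + (4/3*b*B - 2*A*c - 2*a*C)*z^2"

definition Smat_weight :: "real \<Rightarrow> real \<Rightarrow> real \<Rightarrow> real \<Rightarrow> real \<Rightarrow> real" where
  "Smat_weight a b u y z = u^2 + (a*y)^2 + b*y^2 + (b*z)^2"

lemma Smat_quadratic_form:
  "3 * (v \<bullet> (Smat a b c *v v)) = (3* v$1 + 2*a* v$2 - b* v$3)^2/3 + schur_form a b c (v$2) (v$3)"
  by (simp add: inner_vec_def matrix_vector_mult_def sum_3 Smat_def schur_form_def
      field_simps power2_eq_square)

lemma dSmat_quadratic_form:
  "3 * (v \<bullet> (dSmat A B C a b c *v v)) = dSmat_form A B C a b c (3* v$1 + 2*a* v$2 - b* v$3) (v$2) (v$3)"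
  by (simp add: inner_vec_def matrix_vector_mult_def sum_3 dSmat_def dSmat_form_def
      field_simps power2_eq_square)

lemma symmetric_Smat_minus_dSmat:
  "transpose (Smat a b c - s *\<^sub>R dSmat A B C a b c) = Smat a b c - s *\<^sub>R dSmat A B C a b c"
  by (simp add: transpose_def vec_eq_iff forall_3 Smat_def dSmat_def)

lemma schur_form_lower_bound:
  fixes a b c y z :: real
  assumes b: "0 \<le> b" and ac: "\<bar>a*c\<bar> \<le> b^2/100" and c: "\<bar>c\<bar> \<le> b * sqrt b / 100"
  shows "(a*y)^2 + b*y^2 + (b*z)^2 \<le> 4 * schur_form a b c y z"
proof -
  have "schur_form a b c y z
      = 2/3*(a*y)^2 + 2*(b*y^2) - 2/3*(a*b*y*z) - 6*(c*y*z) + 2/3*(b*z)^2 - 2*(a*c*z^2)"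
    by (simp add: schur_form_def algebra_simps power2_eq_square)
  moreover have "2 * \<bar>a*b*y*z\<bar> \<le> (a*y)^2 + (b*z)^2"
    using abs_mult_le_half_sum_squares[of 1 1 "a*y" "b*z"] by (simp add: mult_ac)
  moreover have "200 * \<bar>c*y*z\<bar> \<le> b*y^2 + (b*z)^2"
  proof -
    have "100 * \<bar>c*y*z\<bar> \<le> b * sqrt b * \<bar>y*z\<bar>"
      using mult_right_mono[OF c, of "\<bar>y*z\<bar>"] by (simp add: abs_mult mult_ac)
    also have "\<dots> = \<bar>1 * (sqrt b * y) * (b * z)\<bar>"
      using b by (simp add: abs_mult mult_ac)
    finally show ?thesis
      using abs_mult_le_half_sum_squares[of 1 1 "sqrt b * y" "b * z"] b
      by (simp add: power_mult_distrib)
  qed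
  moreover have "100 * \<bar>a*c*z^2\<bar> \<le> (b*z)^2"
    using mult_right_mono[OF ac, of "z^2"] by (simp add: abs_mult power_mult_distrib)
  moreover have "0 \<le> b*y^2" "0 \<le> (a*y)^2" "0 \<le> (b*z)^2"
    using b by simp_all
  ultimately show ?thesis
    by arith
qed

lemma dSmat_form_bound:
  fixes A B C a b c K \<tau> u y z :: real
  assumes K: "1 \<le> K" and a: "\<bar>a\<bar> \<le> K" and b: "0 \<le> b" "b \<le> K"
    and A: "\<bar>A\<bar> \<le> K" and B: "\<bar>B\<bar> \<le> K" and C: "\<bar>C\<bar> \<le> K * b" and c: "\<bar>c\<bar> \<le> K * b"
    and \<tau>: "0 \<le> \<tau>" "\<tau> \<le> b"
  shows "\<tau> * \<bar>dSmat_form A B C a b c u y z\<bar> \<le> 10 * K^2 * Smat_weight a b u y z"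
proof -
  txt \<open>In the coordinates \<open>(u, \<beta> y, a y, b z)\<close> of Smat_weight, with \<open>b = \<beta>\<^sup>2\<close>,
    \<open>c = c' b\<close> and \<open>C = C' b\<close>, all coefficients of \<open>b \<cdot> dSmat_form\<close> are \<open>O(K\<^sup>2)\<close>.
    For \<open>b = 0\<close> the quotients are junk, but then \<open>c = C = 0\<close>.\<close>
  define \<beta> c' C' where "\<beta> = sqrt b" and "c' = c / b" and "C' = C / b"
  have b_eq: "b = \<beta>^2"
    using b by (simp add: \<beta>_def)
  have c_eq: "c = c' * b" and C_eq: "C = C' * b"
    using b c C by (cases "b = 0"; simp add: c'_def C'_def)+
  have c': "\<bar>c'\<bar> \<le> K" and C': "\<bar>C'\<bar> \<le> K"
    using b c C by (auto simp: c'_def C'_def abs_divide divide_le_eq mult.commute)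
  have K_sq: "K \<le> K^2"
    using K by (simp add: power2_eq_square)
  have \<beta>: "0 \<le> \<beta>" "\<beta> \<le> K"
    using b K real_sqrt_le_of_le_ge_1 by (simp_all add: \<beta>_def)
  have prod_bound: "\<bar>p * q\<bar> \<le> K^2" if "\<bar>p\<bar> \<le> K" "\<bar>q\<bar> \<le> K" for p q :: real
    using that by (simp add: abs_mult power2_eq_square mult_mono)
  have A\<beta>: "\<bar>A*\<beta>\<bar> \<le> K^2" and C'\<beta>: "\<bar>C'*\<beta>\<bar> \<le> K^2"
    using prod_bound[OF A] prod_bound[OF C'] \<beta> by simp_all
  have aA: "\<bar>a*A\<bar> \<le> K^2" and Ac': "\<bar>A*c'\<bar> \<le> K^2" and aC': "\<bar>a*C'\<bar> \<le> K^2"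
    using prod_bound a A c' C' by blast+
  have B_sq: "\<bar>B\<bar> \<le> K^2"
    using B K_sq by linarith
  have b_form: "b * dSmat_form A B C a b c u y z
      = (4/3*(A*\<beta>)) * u * (\<beta>*y) - (2/3*B) * u * (b*z) + (4/3*(a*A) + 2*B) * (\<beta>*y) * (\<beta>*y)
        - (2/3*(A*\<beta>)) * (\<beta>*y) * (b*z) - (2/3*B) * (a*y) * (b*z) - (6*(C'*\<beta>)) * (\<beta>*y) * (b*z)
        + (4/3*B - 2*(A*c') - 2*(a*C')) * (b*z) * (b*z)"
    unfolding dSmat_form_def c_eq C_eq by (simp add: b_eq algebra_simps power2_eq_square)
  have "\<bar>b * dSmat_form A B C a b c u y z\<bar>
      \<le> \<bar>(4/3*(A*\<beta>)) * u * (\<beta>*y)\<bar> + \<bar>(2/3*B) * u * (b*z)\<bar> + \<bar>(4/3*(a*A) + 2*B) * (\<beta>*y) * (\<beta>*y)\<bar>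
        + \<bar>(2/3*(A*\<beta>)) * (\<beta>*y) * (b*z)\<bar> + \<bar>(2/3*B) * (a*y) * (b*z)\<bar> + \<bar>(6*(C'*\<beta>)) * (\<beta>*y) * (b*z)\<bar>
        + \<bar>(4/3*B - 2*(A*c') - 2*(a*C')) * (b*z) * (b*z)\<bar>"
  proof -
    have add: "\<bar>x + y\<bar> \<le> X + \<bar>y\<bar>" and diff: "\<bar>x - y\<bar> \<le> X + \<bar>y\<bar>" if "\<bar>x\<bar> \<le> X" for x y X :: real
      using that abs_triangle_ineq[of x y] abs_triangle_ineq4[of x y] by linarith+
    show ?thesis
      unfolding b_form by (intro add diff order_refl)
  qed
  moreover have "2 * \<bar>(4/3*(A*\<beta>)) * u * (\<beta>*y)\<bar> \<le> 4/3*K^2 * u^2 + 4/3*K^2 * (\<beta>*y)^2"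
    by (rule abs_mult_le_half_sum_squares) (use A\<beta> in simp)
  moreover have "2 * \<bar>(2/3*B) * u * (b*z)\<bar> \<le> 2/3*K^2 * u^2 + 2/3*K^2 * (b*z)^2"
    by (rule abs_mult_le_half_sum_squares) (use B_sq in simp)
  moreover have "2 * \<bar>(4/3*(a*A) + 2*B) * (\<beta>*y) * (\<beta>*y)\<bar> \<le> 10/3*K^2 * (\<beta>*y)^2 + 10/3*K^2 * (\<beta>*y)^2"
    by (rule abs_mult_le_half_sum_squares) (use aA B_sq in arith)
  moreover have "2 * \<bar>(2/3*(A*\<beta>)) * (\<beta>*y) * (b*z)\<bar> \<le> 2/3*K^2 * (\<beta>*y)^2 + 2/3*K^2 * (b*z)^2"
    by (rule abs_mult_le_half_sum_squares) (use A\<beta> in simp)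
  moreover have "2 * \<bar>(2/3*B) * (a*y) * (b*z)\<bar> \<le> 2/3*K^2 * (a*y)^2 + 2/3*K^2 * (b*z)^2"
    by (rule abs_mult_le_half_sum_squares) (use B_sq in simp)
  moreover have "2 * \<bar>(6*(C'*\<beta>)) * (\<beta>*y) * (b*z)\<bar> \<le> 6*K^2 * (\<beta>*y)^2 + 6*K^2 * (b*z)^2"
    by (rule abs_mult_le_half_sum_squares) (use C'\<beta> in simp)
  moreover have "2 * \<bar>(4/3*B - 2*(A*c') - 2*(a*C')) * (b*z) * (b*z)\<bar> \<le> 16/3*K^2 * (b*z)^2 + 16/3*K^2 * (b*z)^2"
    by (rule abs_mult_le_half_sum_squares) (use B_sq Ac' aC' in arith)
  moreover have "K^2 * (\<beta>*y)^2 = K^2 * (b*y^2)"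
    by (simp add: b_eq power_mult_distrib)
  moreover have "0 \<le> K^2 * u^2" "0 \<le> K^2 * (a*y)^2" "0 \<le> K^2 * (b*y^2)" "0 \<le> K^2 * (b*z)^2"
    using b by simp_all
  ultimately have "\<bar>b * dSmat_form A B C a b c u y z\<bar>
      \<le> 10*(K^2*u^2) + 10*(K^2*(a*y)^2) + 10*(K^2*(b*y^2)) + 10*(K^2*(b*z)^2)"
    by linarith
  also have "\<dots> = 10 * K^2 * Smat_weight a b u y z"
    by (simp add: Smat_weight_def algebra_simps)
  finally have "b * \<bar>dSmat_form A B C a b c u y z\<bar> \<le> 10 * K^2 * Smat_weight a b u y z"
    using b by (simp add: abs_mult)
  moreover have "\<tau> * \<bar>dSmat_form A B C a b c u y z\<bar> \<le> b * \<bar>dSmat_form A B C a b c u y z\<bar>"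
    using \<tau> by (simp add: mult_right_mono)
  ultimately show ?thesis
    by linarith
qed

lemma psd_Smat_minus_dSmat:
  fixes A B C a b c K \<delta> t :: real
  assumes K: "1 \<le> K" and a: "\<bar>a\<bar> \<le> K" and b: "0 \<le> b" "b \<le> K"
    and A: "\<bar>A\<bar> \<le> K" and B: "\<bar>B\<bar> \<le> K" and C: "\<bar>C\<bar> \<le> K * b"
    and ac: "\<bar>a*c\<bar> \<le> b^2/100" and c: "\<bar>c\<bar> \<le> b * sqrt b / 100"
    and t: "0 \<le> t" and \<delta>: "0 < \<delta>" "\<delta> * t \<le> b"
  shows "psd (Smat a b c - (\<delta> / (40 * K^2) * t) *\<^sub>R dSmat A B C a b c)"
  unfolding psd_def
proof (intro conjI allI)
  show "transpose (Smat a b c - (\<delta> / (40 * K^2) * t) *\<^sub>R dSmat A B C a b c)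
      = Smat a b c - (\<delta> / (40 * K^2) * t) *\<^sub>R dSmat A B C a b c"
    by (rule symmetric_Smat_minus_dSmat)
  fix v :: "real^3"
  define u where "u = 3 * v$1 + 2 * a * v$2 - b * v$3"
  define E where "E = dSmat_form A B C a b c u (v$2) (v$3)"
  define W where "W = Smat_weight a b u (v$2) (v$3)"
  have c_le: "\<bar>c\<bar> \<le> K * b"
  proof -
    have "b * sqrt b \<le> b * K"
      using b K real_sqrt_le_of_le_ge_1 by (intro mult_left_mono) auto
    then show ?thesis
      using c b by (simp add: mult.commute)
  qed
  have W_le: "W \<le> 4 * (u^2/3 + schur_form a b c (v$2) (v$3))"
    using schur_form_lower_bound[OF b(1) ac c, of "v$2" "v$3"] zero_le_power2[of u]
    unfolding W_def Smat_weight_def distrib_left by linarith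
  have E_le: "\<delta> * t * \<bar>E\<bar> \<le> 10 * K^2 * W"
    unfolding E_def W_def using \<delta> t by (intro dSmat_form_bound K a b A B C c_le) simp_all
  have K_pos: "0 < K^2"
    using K by simp
  have "\<delta> / (40 * K^2) * t * E = (\<delta> * t * E) / (40 * K^2)"
    by simp
  also have "\<dots> \<le> (\<delta> * t * \<bar>E\<bar>) / (40 * K^2)"
    using \<delta> t K_pos by (intro divide_right_mono mult_left_mono) auto
  also have "\<dots> \<le> (10 * K^2 * W) / (40 * K^2)"
    using E_le K_pos by (intro divide_right_mono) auto
  also have "\<dots> \<le> u^2/3 + schur_form a b c (v$2) (v$3)"
    using W_le K_pos by simp
  finally have "0 \<le> 3 * (v \<bullet> (Smat a b c *v v)) - (\<delta> / (40 * K^2) * t) * (3 * (v \<bullet> (dSmat A B C a b c *v v)))"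
    unfolding Smat_quadratic_form dSmat_quadratic_form u_def E_def by simp
  then show "0 \<le> v \<bullet> ((Smat a b c - (\<delta> / (40 * K^2) * t) *\<^sub>R dSmat A B C a b c) *v v)"
    by (simp add: matrix_vector_mult_diff_rdistrib scaleR_matrix_vector_assoc[symmetric] inner_diff_right)
qed

lemma has_derivative_Dom_unique:
  fixes g :: "('n::finite) pt \<Rightarrow> real"
  assumes T: "T > 0" and z: "z \<in> Dom T"
    and "(g has_derivative g') (at z within Dom T)" and "(g has_derivative g'') (at z within Dom T)"
  shows "g' = g''"
proof (rule frechet_derivative_unique_within[OF assms(3,4)])
  fix i :: "('n::finite) pt" and e :: real
  assume i: "i \<in> Basis" and e: "e > 0"
  define d where "d = (if fst z \<le> T/2 then 1 else -1) * (min e T / 2)"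
  have "fst i = 0 \<or> fst i = 1"
    using i by (auto simp: Basis_prod_def)
  moreover have "0 \<le> fst z" "fst z \<le> T"
    using z by (auto simp: Dom_def)
  ultimately have "0 \<le> fst z + d * fst i" "fst z + d * fst i \<le> T"
    using T e by (auto simp: d_def min_def)
  moreover have "0 < \<bar>d\<bar>" "\<bar>d\<bar> < e"
    using T e by (auto simp: d_def min_def abs_mult)
  ultimately show "\<exists>d. 0 < \<bar>d\<bar> \<and> \<bar>d\<bar> < e \<and> z + d *\<^sub>R i \<in> Dom T"
    by (intro exI[of _ d]) (auto simp: Dom_def mem_Times_iff)
qed

lemma dt_eqI:
  fixes g :: "('n::finite) pt \<Rightarrow> real"
  assumes "T > 0" and "z \<in> Dom T" and g: "(g has_derivative g') (at z within Dom T)" and "g' tdir = r"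
  shows "dt T g z = r"
proof -
  have "frechet_derivative g (at z within Dom T) = g'"
    using has_derivative_Dom_unique[OF assms(1,2) _ g] g
    by (metis differentiableI frechet_derivative_works)
  then show ?thesis
    using assms(4) by (simp add: dt_def dD_def)
qed

lemma dtS_eq_dSmat:
  fixes a b c :: "('n::finite) pt \<Rightarrow> real"
  assumes T: "T > 0" and z: "z \<in> Dom T" and "a differentiable (at z within Dom T)"
    and "b differentiable (at z within Dom T)" and "c differentiable (at z within Dom T)"
  shows "dtS T a b c z = dSmat (dt T a z) (dt T b z) (dt T c z) (a z) (b z) (c z)"
proof -
  obtain a' b' c' where
    a': "(a has_derivative a') (at z within Dom T)" and
    b': "(b has_derivative b') (at z within Dom T)" and
    c': "(c has_derivative c') (at z within Dom T)"
    using assms(3-5) by (auto simp: differentiable_def)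
  have dt_abc: "dt T a z = a' tdir" "dt T b z = b' tdir" "dt T c z = c' tdir"
    by (rule dt_eqI[OF T z a' refl] dt_eqI[OF T z b' refl] dt_eqI[OF T z c' refl])+
  show ?thesis
    unfolding vec_eq_iff forall_3 dtS_def Smat_def dSmat_def dt_abc
    by (simp only: vec_lambda_beta vector_scaleR_component vector_1 vector_2 vector_3,
        intro conjI dt_eqI[OF T z],
        auto intro!: derivative_eq_intros a' b' c' simp: algebra_simps power2_eq_square)
qed

lemma tsymbol0_differentiable:
  "tsymbol0 T f \<Longrightarrow> z \<in> Dom T \<Longrightarrow> f differentiable (at z within Dom T)"
  unfolding tsymbol0_def by (drule spec[of _ "[]"]) simp

lemma tsymbol0_bounded_derivative:
  fixes f :: "('n::finite) pt \<Rightarrow> real"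
  assumes "tsymbol0 T f" and "set vs \<subseteq> dirs" and "\<forall>v\<in>set vs. v \<notin> xidirs"
  shows "\<exists>C. \<forall>z\<in>Dom T. \<bar>dDs T vs f z\<bar> \<le> C"
proof -
  have "filter (\<lambda>v. v \<in> xidirs) vs = []"
    using assms(3) by (simp add: filter_empty_conv)
  moreover have "(1 + norm w) powr 0 = 1" for w :: "real^'n"
    using add_pos_nonneg[OF zero_less_one norm_ge_zero[of w]] by simp
  ultimately show ?thesis
    using assms(1,2) unfolding tsymbol0_def by force
qed

lemma tsymbol0_bounded_with_dt:
  fixes f :: "('n::finite) pt \<Rightarrow> real"
  assumes "tsymbol0 T f"
  shows "\<exists>K. \<forall>z\<in>Dom T. \<bar>f z\<bar> \<le> K \<and> \<bar>dt T f z\<bar> \<le> K"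
proof -
  have "tdir \<in> dirs" "tdir \<notin> (xidirs :: ('n::finite) pt set)"
    by (auto simp: dirs_def tdir_def xidirs_def)
  then obtain K1 K2 where "\<forall>z\<in>Dom T. \<bar>f z\<bar> \<le> K1" "\<forall>z\<in>Dom T. \<bar>dt T f z\<bar> \<le> K2"
    using tsymbol0_bounded_derivative[OF assms, of "[]"] tsymbol0_bounded_derivative[OF assms, of "[tdir]"]
    by (auto simp: dt_def)
  then show ?thesis
    by (intro exI[of _ "max K1 K2"]) (auto simp: le_max_iff_disj)
qed

lemma tsymbol0_uniform_bound:
  fixes a b c :: "('n::finite) pt \<Rightarrow> real"
  assumes "tsymbol0 T a" and "tsymbol0 T b" and b: "\<forall>z\<in>Dom T. 0 \<le> b z"
    and C: "\<forall>z\<in>Dom T. \<bar>dt T c z\<bar> \<le> C * b z"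
  shows "\<exists>K\<ge>1. \<forall>z\<in>Dom T. \<bar>a z\<bar> \<le> K \<and> b z \<le> K \<and> \<bar>dt T a z\<bar> \<le> K \<and> \<bar>dt T b z\<bar> \<le> K
                         \<and> \<bar>dt T c z\<bar> \<le> K * b z"
proof -
  obtain Ka Kb where
    Ka: "\<forall>z\<in>Dom T. \<bar>a z\<bar> \<le> Ka \<and> \<bar>dt T a z\<bar> \<le> Ka" and
    Kb: "\<forall>z\<in>Dom T. \<bar>b z\<bar> \<le> Kb \<and> \<bar>dt T b z\<bar> \<le> Kb"
    using tsymbol0_bounded_with_dt assms(1,2) by metis
  define K where "K = max 1 (max Ka (max Kb \<bar>C\<bar>))"
  have "\<bar>dt T c z\<bar> \<le> K * b z" if "z \<in> Dom T" for z
  proof -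
    have "C * b z \<le> K * b z"
      using b that by (intro mult_right_mono) (auto simp: K_def)
    then show ?thesis
      using C that by force
  qed
  then show ?thesis
    using Ka Kb by (intro exI[of _ K]) (force simp: K_def le_max_iff_disj)
qed

theorem mainTheorem10:
  "\<exists>epsbar>0. \<forall>(T::real) (\<delta>1::real) (a::('n::finite) pt \<Rightarrow> real) b c.
     T > 0 \<longrightarrow> \<delta>1 > 0 \<longrightarrow>
     tsymbol0 T a \<longrightarrow> tsymbol0 T b \<longrightarrow> tsymbol0 T c \<longrightarrow>
     (\<forall>z\<in>Dom T. b z \<ge> \<delta>1 * fst z) \<longrightarrow>
     (\<forall>z\<in>Dom T. \<bar>a z * c z\<bar> \<le> epsbar * (b z)^2) \<longrightarrow>
     (\<forall>z\<in>Dom T. \<bar>c z\<bar> \<le> epsbar * b z powr (3/2)) \<longrightarrow>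
     (\<exists>C. \<forall>z\<in>Dom T. \<bar>dt T c z\<bar> \<le> C * b z) \<longrightarrow>
     (\<exists>\<epsilon>>0. \<forall>z\<in>Dom T.
        psd (Smat (a z) (b z) (c z) - (\<epsilon> * fst z) *\<^sub>R dtS T a b c z))"
proof (rule exI[of _ "1/100"], intro conjI allI impI)
  show "(0::real) < 1/100"
    by simp
  fix T \<delta> :: real and a b c :: "('n::finite) pt \<Rightarrow> real"
  assume T: "T > 0" and \<delta>: "\<delta> > 0" and symbols: "tsymbol0 T a" "tsymbol0 T b" "tsymbol0 T c"
    and b_ge: "\<forall>z\<in>Dom T. b z \<ge> \<delta> * fst z"
    and ac: "\<forall>z\<in>Dom T. \<bar>a z * c z\<bar> \<le> 1/100 * (b z)^2"
    and c: "\<forall>z\<in>Dom T. \<bar>c z\<bar> \<le> 1/100 * b z powr (3/2)"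
    and "\<exists>C. \<forall>z\<in>Dom T. \<bar>dt T c z\<bar> \<le> C * b z"
  then obtain C where C: "\<forall>z\<in>Dom T. \<bar>dt T c z\<bar> \<le> C * b z"
    by blast
  have t: "0 \<le> fst z" if "z \<in> Dom T" for z
    using that by (auto simp: Dom_def)
  have b: "\<forall>z\<in>Dom T. 0 \<le> b z"
    using b_ge t \<delta> by (meson less_imp_le mult_nonneg_nonneg order_trans)
  obtain K where K: "1 \<le> K" and bounds: "\<forall>z\<in>Dom T. \<bar>a z\<bar> \<le> K \<and> b z \<le> K
      \<and> \<bar>dt T a z\<bar> \<le> K \<and> \<bar>dt T b z\<bar> \<le> K \<and> \<bar>dt T c z\<bar> \<le> K * b z"
    using tsymbol0_uniform_bound[OF symbols(1,2) b C] by blast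
  show "\<exists>\<epsilon>>0. \<forall>z\<in>Dom T. psd (Smat (a z) (b z) (c z) - (\<epsilon> * fst z) *\<^sub>R dtS T a b c z)"
  proof (intro exI[of _ "\<delta> / (40 * K^2)"] conjI ballI)
    show "0 < \<delta> / (40 * K^2)"
      using \<delta> K by simp
    fix z :: "'n pt" assume z: "z \<in> Dom T"
    have "\<bar>c z\<bar> \<le> b z * sqrt (b z) / 100"
      using c z b by (simp add: powr_three_halves)
    with bounds ac b_ge b z have
      "psd (Smat (a z) (b z) (c z) - (\<delta> / (40 * K^2) * fst z) *\<^sub>R dSmat (dt T a z) (dt T b z) (dt T c z) (a z) (b z) (c z))"
      by (intro psd_Smat_minus_dSmat K \<delta> t) auto
    then show "psd (Smat (a z) (b z) (c z) - (\<delta> / (40 * K^2) * fst z) *\<^sub>R dtS T a b c z)"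
      using dtS_eq_dSmat[OF T z tsymbol0_differentiable[OF symbols(1) z]
          tsymbol0_differentiable[OF symbols(2) z] tsymbol0_differentiable[OF symbols(3) z]]
      by simp
  qed
qed

end
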